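(* Let $G$ be a graph with $V(G)=[n]$, $k\ge1$, $H=G^k$, and let $(P,N)=R[H]$ be the sample set defined below. Then every CNF formula consistent with $(P,N)$ has at least $\chi(H)$ clauses.
   Context: $G^k$ is the $k$-fold lexicographic product; its vertices are tuples $\vec u=(u_1,\dots,u_k)\in V(G)^k$, and $\vec u\vec v\in E(G^k)$ iff there is $i$ with $u_j=v_j$ for $j<i$ and $u_iv_i\in E(G)$. For $u\in[n]$ let $\mathrm{enc}(u)=0^{u-1}10^{n-u}\in\{0,1\}^n$, and for an edge $uv$ let $\mathrm{enc}(uv)\in\{0,1\}^n$ have 1s exactly at positions $u$ and $v$. Samples lie in $\{0,1\}^{nk}$ (variables $z(i,u)$, $i\in[k]$, $u\in[n]$, in $k$ blocks). Negative samples: $N=\{\mathrm{enc}(u_1)\cdots\mathrm{enc}(u_k):\vec u\in V(H)\}$. Positive samples: $P=\{\mathrm{enc}(u_1)\cdots\mathrm{enc}(u_{i-1})\,\mathrm{enc}(u_iv)\,\mathrm{enc}(u_{i+1})\cdots\mathrm{enc}(u_k):\vec u\in V(H),\ i\in[k],\ u_iv\in E(G)\}$. A formula is consistent if it is true on all of $P$ and false on all of $N$. $\chi$ is the chromatic number. *)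

theory Defs
  imports Main
begin

definition simple_graph_on :: "nat \<Rightarrow> (nat \<times> nat) set \<Rightarrow> bool" where
  "simple_graph_on n E \<longleftrightarrow> E \<subseteq> {1..n} \<times> {1..n} \<and> sym E \<and> (\<forall>u. (u, u) \<notin> E)"

(* Vertices of G^k: tuples (u_1,...,u_k) in [n]^k, as lists of length k
   (list position i-1 holds coordinate u_i). *)
definition lex_vertices :: "nat \<Rightarrow> nat \<Rightarrow> nat list set" where
  "lex_vertices n k = {us. length us = k \<and> set us \<subseteq> {1..n}}"

definition lex_adj :: "(nat \<times> nat) set \<Rightarrow> nat \<Rightarrow> nat list \<Rightarrow> nat list \<Rightarrow> bool" where
  "lex_adj E k us vs \<longleftrightarrow>
     (\<exists>i<k. (\<forall>j<i. us ! j = vs ! j) \<and> (us ! i, vs ! i) \<in> E)"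

definition proper_colouring :: "'v set \<Rightarrow> ('v \<Rightarrow> 'v \<Rightarrow> bool) \<Rightarrow> nat \<Rightarrow> ('v \<Rightarrow> nat) \<Rightarrow> bool" where
  "proper_colouring V adj c f \<longleftrightarrow>
     (\<forall>v\<in>V. f v < c) \<and> (\<forall>u\<in>V. \<forall>v\<in>V. adj u v \<longrightarrow> f u \<noteq> f v)"

definition chromatic_number :: "'v set \<Rightarrow> ('v \<Rightarrow> 'v \<Rightarrow> bool) \<Rightarrow> nat" where
  "chromatic_number V adj = (LEAST c. \<exists>f. proper_colouring V adj c f)"

(* Boolean variables z(i,u), i in [k], u in [n], encoded as the pair (i,u). *)
definition sample_vars :: "nat \<Rightarrow> nat \<Rightarrow> (nat \<times> nat) set" where
  "sample_vars n k = {1..k} \<times> {1..n}"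

(* A sample in {0,1}^{nk} is an assignment to the variables (value False off the variable set). *)
type_synonym assignment = "nat \<times> nat \<Rightarrow> bool"

(* CNF: a finite set of clauses; a clause is a finite set of literals (variable, polarity). *)
type_synonym literal = "(nat \<times> nat) \<times> bool"
type_synonym clause = "literal set"
type_synonym cnf = "clause set"

definition is_cnf_over :: "(nat \<times> nat) set \<Rightarrow> cnf \<Rightarrow> bool" where
  "is_cnf_over X F \<longleftrightarrow> finite F \<and> (\<forall>C\<in>F. finite C \<and> fst ` C \<subseteq> X)"

definition eval_clause :: "assignment \<Rightarrow> clause \<Rightarrow> bool" where
  "eval_clause a C \<longleftrightarrow> (\<exists>(x, b)\<in>C. a x = b)"

definition eval_cnf :: "assignment \<Rightarrow> cnf \<Rightarrow> bool" where
  "eval_cnf a F \<longleftrightarrow> (\<forall>C\<in>F. eval_clause a C)"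

(* enc(u_1)...enc(u_k): block i has a single 1 at position u_i. *)
definition neg_sample :: "nat \<Rightarrow> nat \<Rightarrow> nat list \<Rightarrow> assignment" where
  "neg_sample n k us = (\<lambda>(i, w). (i, w) \<in> sample_vars n k \<and> w = us ! (i - 1))"

(* enc(u_1)...enc(u_i v)...enc(u_k): block i additionally has a 1 at position v. *)
definition pos_sample :: "nat \<Rightarrow> nat \<Rightarrow> nat list \<Rightarrow> nat \<Rightarrow> nat \<Rightarrow> assignment" where
  "pos_sample n k us i v = (\<lambda>(j, w). (j, w) \<in> sample_vars n k \<and>
      (w = us ! (j - 1) \<or> (j = i \<and> w = v)))"

definition neg_samples :: "nat \<Rightarrow> (nat \<times> nat) set \<Rightarrow> nat \<Rightarrow> assignment set" where
  "neg_samples n E k = neg_sample n k ` lex_vertices n k"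

definition pos_samples :: "nat \<Rightarrow> (nat \<times> nat) set \<Rightarrow> nat \<Rightarrow> assignment set" where
  "pos_samples n E k = {pos_sample n k us i v | us i v.
      us \<in> lex_vertices n k \<and> i \<in> {1..k} \<and> (us ! (i - 1), v) \<in> E}"

definition consistent :: "assignment set \<Rightarrow> assignment set \<Rightarrow> cnf \<Rightarrow> bool" where
  "consistent P N F \<longleftrightarrow> (\<forall>a\<in>P. eval_cnf a F) \<and> (\<forall>a\<in>N. \<not> eval_cnf a F)"

end

theory Submission
  imports Defs
begin

(* Every negative sample (a vertex us of H = G^k) falsifies some clause of F;
   colour us by such a clause.  This is a proper colouring of H with at most
   |F| colours: if us and vs are adjacent, witnessed at coordinate i by the
   edge (us!i, vs!i), then the positive sample obtained from us by adding
   the 1 at position vs!i of block i+1 agrees, variable by variable, with one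
   of the two negative samples of us and vs.  A clause falsified by both
   negative samples is therefore also falsified by this positive sample,
   contradicting consistency. *)

lemma chromatic_number_le_card:
  assumes "finite S"
    and into_S: "\<And>v. v \<in> V \<Longrightarrow> f v \<in> S"
    and distinct: "\<And>u v. u \<in> V \<Longrightarrow> v \<in> V \<Longrightarrow> adj u v \<Longrightarrow> f u \<noteq> f v"
  shows "chromatic_number V adj \<le> card S"
proof -
  obtain h where h: "bij_betw h S {0..<card S}"
    using ex_bij_betw_finite_nat[OF \<open>finite S\<close>] by blast
  have "proper_colouring V adj (card S) (h \<circ> f)"
    unfolding proper_colouring_def
  proof (intro conjI ballI impI)
    fix v assume "v \<in> V"
    then show "(h \<circ> f) v < card S"
      using into_S bij_betw_apply[OF h] by fastforce
  next
    fix u v assume "u \<in> V" "v \<in> V" "adj u v"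
    then show "(h \<circ> f) u \<noteq> (h \<circ> f) v"
      using into_S distinct bij_betw_imp_inj_on[OF h] by (auto dest: inj_onD)
  qed
  then show ?thesis
    unfolding chromatic_number_def by (metis Least_le)
qed

lemma clause_falsified_by_mixture:
  assumes "\<And>x. a x = b x \<or> a x = c x"
    and "\<not> eval_clause b C" and "\<not> eval_clause c C"
  shows "\<not> eval_clause a C"
  using assms unfolding eval_clause_def by fastforce

text \<open>The positive sample obtained from the vertex us by adding, in block
  i+1, the coordinate of another vertex vs is pointwise a mixture of the
  negative samples of us and vs: at the added variable it agrees with vs,
  everywhere else with us.\<close>

lemma pos_sample_mixes_neg_samples:
  assumes vs: "vs \<in> lex_vertices n k" and "i < k"
  shows "pos_sample n k us (Suc i) (vs ! i) x = neg_sample n k us x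
       \<or> pos_sample n k us (Suc i) (vs ! i) x = neg_sample n k vs x"
proof (cases "x = (Suc i, vs ! i)")
  case True
  have "vs ! i \<in> {1..n}"
    using vs \<open>i < k\<close> unfolding lex_vertices_def by (auto dest!: nth_mem)
  then have "x \<in> sample_vars n k"
    using True \<open>i < k\<close> unfolding sample_vars_def by auto
  then show ?thesis
    using True unfolding pos_sample_def neg_sample_def by auto
next
  case False
  then show ?thesis
    unfolding pos_sample_def neg_sample_def by (auto split: prod.split)
qed

lemma neg_sample_falsifies_clause:
  assumes "consistent (pos_samples n E k) (neg_samples n E k) F"
    and "us \<in> lex_vertices n k"
  shows "\<exists>C\<in>F. \<not> eval_clause (neg_sample n k us) C"
  using assms unfolding consistent_def neg_samples_def eval_cnf_def by blast

text \<open>Two adjacent vertices of G^k never falsify a common clause of a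
  consistent formula, since that clause would also be falsified by the
  positive sample joining them.\<close>

lemma adjacent_no_common_falsified_clause:
  assumes cons: "consistent (pos_samples n E k) (neg_samples n E k) F"
    and us: "us \<in> lex_vertices n k" and vs: "vs \<in> lex_vertices n k"
    and adj: "lex_adj E k us vs"
    and "C \<in> F"
    and falsified_us: "\<not> eval_clause (neg_sample n k us) C"
  shows "eval_clause (neg_sample n k vs) C"
proof (rule ccontr)
  assume falsified_vs: "\<not> eval_clause (neg_sample n k vs) C"
  obtain i where "i < k" and edge: "(us ! i, vs ! i) \<in> E"
    using adj unfolding lex_adj_def by auto
  let ?p = "pos_sample n k us (Suc i) (vs ! i)"
  have "?p \<in> pos_samples n E k"
    unfolding pos_samples_def using us \<open>i < k\<close> edge by fastforce
  then have "eval_clause ?p C"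
    using cons \<open>C \<in> F\<close> unfolding consistent_def eval_cnf_def by blast
  moreover have "\<not> eval_clause ?p C"
    using pos_sample_mixes_neg_samples[OF vs \<open>i < k\<close>]
    by (rule clause_falsified_by_mixture) (fact falsified_us falsified_vs)+
  ultimately show False by contradiction
qed

theorem mainTheorem16:
  fixes n k :: nat and E :: "(nat \<times> nat) set" and F :: cnf
  assumes "simple_graph_on n E"
    and "k \<ge> 1"
    and "is_cnf_over (sample_vars n k) F"
    and "consistent (pos_samples n E k) (neg_samples n E k) F"
  shows "card F \<ge> chromatic_number (lex_vertices n k) (lex_adj E k)"
proof -
  define clause_of where
    "clause_of us = (SOME C. C \<in> F \<and> \<not> eval_clause (neg_sample n k us) C)" for us
  have clause_of: "clause_of us \<in> F \<and> \<not> eval_clause (neg_sample n k us) (clause_of us)"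
    if "us \<in> lex_vertices n k" for us
    using neg_sample_falsifies_clause[OF assms(4) that] unfolding clause_of_def
    by - (rule someI_ex, blast)
  have "finite F"
    using assms(3) unfolding is_cnf_over_def by blast
  then show ?thesis
  proof (rule chromatic_number_le_card)
    show "clause_of us \<in> F" if "us \<in> lex_vertices n k" for us
      using clause_of[OF that] by blast
    show "clause_of us \<noteq> clause_of vs"
      if "us \<in> lex_vertices n k" "vs \<in> lex_vertices n k" "lex_adj E k us vs" for us vs
      using adjacent_no_common_falsified_clause[OF assms(4) that]
        clause_of[OF that(1)] clause_of[OF that(2)] by fastforce
  qed
qed

end
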